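(* Let $(a,b)\subset\mathbb{R}$ be a finite interval, $m,n\in\mathbb{N}$, $\varepsilon_0>0$. For each $\varepsilon\in[0,\varepsilon_0)$ let $A(\cdot;\varepsilon)\in (W^{n-1}_\infty)^{m\times m}$ and let $L(\varepsilon)\colon (W^n_\infty)^m\to(W^{n-1}_\infty)^m$, $L(\varepsilon)y:=y'+A(\cdot;\varepsilon)y$. The following three conditions are equivalent: (I) $A(\cdot;\varepsilon)\to A(\cdot;0)$ in $(W^{n-1}_\infty)^{m\times m}$ as $\varepsilon\to0+$; $(a_1)$ $\|L(\varepsilon)-L(0)\|\to0$ as $\varepsilon\to0+$, where $\|\cdot\|$ is the operator norm from $(W^n_\infty)^m$ to $(W^{n-1}_\infty)^m$; $(a_2)$ $L(\varepsilon)y\to L(0)y$ in $(W^{n-1}_\infty)^m$ as $\varepsilon\to0+$ for every $y\in(W^n_\infty)^m$.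
   Context: For an integer $k\ge0$, $W^k_\infty=W^k_\infty([a,b];\mathbb{C})$ is the Sobolev space of complex functions on $[a,b]$ whose derivatives up to order $k$ are essentially bounded, with norm $\|y\|_{k,\infty}=\sum_{j=0}^k\|y^{(j)}\|_{L_\infty}$; $W^0_\infty=L_\infty$. $(W^k_\infty)^m$, $(W^k_\infty)^{m\times m}$ denote vector/matrix functions with components in $W^k_\infty$, normed componentwise. *)

theory Defs
  imports "HOL-Analysis.Analysis" "HOL-Probability.Essential_Supremum"
begin

text \<open>Sobolev space W^k_infinity([a,b];C), following the paper's convention:
  y^(k-1) absolutely continuous and y^(k) essentially bounded (for k = 0: y in L_infinity).
  g j plays the role of y^(j), j = 0..k.\<close>

definition sob_derivs :: "real \<Rightarrow> real \<Rightarrow> nat \<Rightarrow> (real \<Rightarrow> complex) \<Rightarrow> (nat \<Rightarrow> real \<Rightarrow> complex) \<Rightarrow> bool" where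
  "sob_derivs a b k f g \<longleftrightarrow>
     (\<forall>x\<in>{a..b}. g 0 x = f x) \<and>
     (\<forall>j<k. g (Suc j) absolutely_integrable_on {a..b} \<and>
            (\<forall>x\<in>{a..b}. g j x = g j a + integral {a..x} (g (Suc j)))) \<and>
     g k \<in> borel_measurable (lebesgue_on {a..b}) \<and>
     (\<exists>C. AE x in lebesgue_on {a..b}. norm (g k x) \<le> C)"

definition Wsob :: "real \<Rightarrow> real \<Rightarrow> nat \<Rightarrow> (real \<Rightarrow> complex) \<Rightarrow> bool" where
  "Wsob a b k f \<longleftrightarrow> (\<exists>g. sob_derivs a b k f g)"

definition Linf_norm :: "real \<Rightarrow> real \<Rightarrow> (real \<Rightarrow> complex) \<Rightarrow> real" where
  "Linf_norm a b f = real_of_ereal (esssup (lebesgue_on {a..b}) (\<lambda>x. ereal (norm (f x))))"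

definition sob_deriv :: "real \<Rightarrow> real \<Rightarrow> nat \<Rightarrow> nat \<Rightarrow> (real \<Rightarrow> complex) \<Rightarrow> real \<Rightarrow> complex" where
  "sob_deriv a b k j f = (SOME g. sob_derivs a b k f g) j"

definition sob_norm :: "real \<Rightarrow> real \<Rightarrow> nat \<Rightarrow> (real \<Rightarrow> complex) \<Rightarrow> real" where
  "sob_norm a b k f = (\<Sum>j\<le>k. Linf_norm a b (sob_deriv a b k j f))"

definition vW :: "real \<Rightarrow> real \<Rightarrow> nat \<Rightarrow> (real \<Rightarrow> complex^'m) \<Rightarrow> bool" where
  "vW a b k y \<longleftrightarrow> (\<forall>i. Wsob a b k (\<lambda>x. y x $ i))"

definition vnorm :: "real \<Rightarrow> real \<Rightarrow> nat \<Rightarrow> (real \<Rightarrow> complex^'m) \<Rightarrow> real" where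
  "vnorm a b k y = (\<Sum>i\<in>UNIV. sob_norm a b k (\<lambda>x. y x $ i))"

definition mW :: "real \<Rightarrow> real \<Rightarrow> nat \<Rightarrow> (real \<Rightarrow> complex^'m^'m) \<Rightarrow> bool" where
  "mW a b k A \<longleftrightarrow> (\<forall>i j. Wsob a b k (\<lambda>x. A x $ i $ j))"

definition mnorm :: "real \<Rightarrow> real \<Rightarrow> nat \<Rightarrow> (real \<Rightarrow> complex^'m^'m) \<Rightarrow> real" where
  "mnorm a b k A = (\<Sum>i\<in>UNIV. \<Sum>j\<in>UNIV. sob_norm a b k (\<lambda>x. A x $ i $ j))"

definition Lop :: "real \<Rightarrow> real \<Rightarrow> nat \<Rightarrow> (real \<Rightarrow> complex^'m^'m) \<Rightarrow> (real \<Rightarrow> complex^'m) \<Rightarrow> real \<Rightarrow> complex^'m" where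
  "Lop a b n A y x = (\<chi> i. sob_deriv a b n 1 (\<lambda>t. y t $ i) x) + A x *v y x"

definition opnorm :: "real \<Rightarrow> real \<Rightarrow> nat \<Rightarrow> ((real \<Rightarrow> complex^'m) \<Rightarrow> (real \<Rightarrow> complex^'m)) \<Rightarrow> ereal" where
  "opnorm a b n T = Sup {ereal (vnorm a b (n - 1) (T y)) | y. vW a b n y \<and> vnorm a b n y \<le> 1}"

end

theory Submission
  imports Defs
begin

text \<open>\<open>L(\<epsilon>) - L(0)\<close> is the multiplication operator \<open>y \<mapsto> B\<^sub>\<epsilon> y\<close> with
  \<open>B\<^sub>\<epsilon> = A(\<cdot>;\<epsilon>) - A(\<cdot>;0)\<close>. By the Leibniz rule its norm as an operator from
  \<open>W\<^sup>n\<close> to \<open>W\<^sup>n\<^sup>-\<^sup>1\<close> is at most a constant times the \<open>W\<^sup>n\<^sup>-\<^sup>1\<close>-norm of \<open>B\<^sub>\<epsilon>\<close>;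
  conversely, its values on the constant unit vectors \<open>e\<^sub>j\<close> are the columns of \<open>B\<^sub>\<epsilon>\<close>,
  whose norms add up to the norm of \<open>B\<^sub>\<epsilon>\<close>.
  The Leibniz rule for generalized derivatives rests on the product rule for primitives
  (Fubini on a square) and on the a.e. uniqueness of generalized derivatives, which holds
  because an integrable function with vanishing integrals over all intervals vanishes a.e.\<close>

section \<open>Essentially bounded functions\<close>

definition ess_bounded_on :: "real \<Rightarrow> real \<Rightarrow> (real \<Rightarrow> complex) \<Rightarrow> bool" where
  "ess_bounded_on a b f \<longleftrightarrow>
     f \<in> borel_measurable (lebesgue_on {a..b}) \<and> (\<exists>C. AE x in lebesgue_on {a..b}. norm (f x) \<le> C)"

lemma ess_bounded_on_add:
  assumes "ess_bounded_on a b f" "ess_bounded_on a b g"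
  shows "ess_bounded_on a b (\<lambda>x. f x + g x)"
proof -
  obtain C D where "AE x in lebesgue_on {a..b}. norm (f x) \<le> C" "AE x in lebesgue_on {a..b}. norm (g x) \<le> D"
    using assms unfolding ess_bounded_on_def by blast
  then have "AE x in lebesgue_on {a..b}. norm (f x + g x) \<le> C + D"
    by eventually_elim (meson add_mono norm_triangle_le)
  with assms show ?thesis unfolding ess_bounded_on_def by auto
qed

lemma ess_bounded_on_mult:
  assumes "ess_bounded_on a b f" "ess_bounded_on a b g"
  shows "ess_bounded_on a b (\<lambda>x. f x * g x)"
proof -
  obtain C D where "AE x in lebesgue_on {a..b}. norm (f x) \<le> C" "AE x in lebesgue_on {a..b}. norm (g x) \<le> D"
    using assms unfolding ess_bounded_on_def by blast
  then have "AE x in lebesgue_on {a..b}. norm (f x * g x) \<le> C * D"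
    by eventually_elim (simp add: norm_mult mult_mono')
  with assms show ?thesis unfolding ess_bounded_on_def by auto
qed

lemma ess_bounded_on_const: "ess_bounded_on a b (\<lambda>x. c)"
  unfolding ess_bounded_on_def by auto

lemma ess_bounded_on_sum:
  "(\<And>i. i \<in> I \<Longrightarrow> ess_bounded_on a b (f i)) \<Longrightarrow> ess_bounded_on a b (\<lambda>x. \<Sum>i\<in>I. f i x)"
  by (induction I rule: infinite_finite_induct) (auto intro: ess_bounded_on_add ess_bounded_on_const)

lemma ess_bounded_on_continuous:
  assumes "continuous_on {a..b} f"
  shows "ess_bounded_on a b f"
proof -
  have "bounded (f ` {a..b})"
    by (intro compact_imp_bounded compact_continuous_image assms compact_Icc)
  then obtain B where "\<forall>x\<in>{a..b}. norm (f x) \<le> B"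
    unfolding bounded_iff by blast
  then have "AE x in lebesgue_on {a..b}. norm (f x) \<le> B"
    by (intro AE_I2) auto
  moreover have "f \<in> borel_measurable (lebesgue_on {a..b})"
    by (rule continuous_imp_measurable_on_sets_lebesgue[OF assms]) auto
  ultimately show ?thesis
    unfolding ess_bounded_on_def by blast
qed

text \<open>On a null interval the essential supremum is \<open>-\<infinity>\<close>, which \<open>real_of_ereal\<close> maps to \<open>0\<close>;
  so none of the following facts needs \<open>a < b\<close>.\<close>

lemma Linf_norm_nonneg: "Linf_norm a b f \<ge> 0"
proof (cases "emeasure (lebesgue_on {a..b}) (space (lebesgue_on {a..b})) = 0")
  case True
  then show ?thesis
    unfolding Linf_norm_def
    by (cases "(\<lambda>x. ereal (norm (f x))) \<in> borel_measurable (lebesgue_on {a..b})")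
       (simp_all add: esssup_zero_space esssup_non_measurable top_ereal_def)
next
  case False
  then have "esssup (lebesgue_on {a..b}) (\<lambda>x. 0) \<le> esssup (lebesgue_on {a..b}) (\<lambda>x. ereal (norm (f x)))"
    by (intro esssup_mono) auto
  with False show ?thesis
    unfolding Linf_norm_def by (simp add: esssup_const real_of_ereal_pos)
qed

lemma Linf_norm_le:
  assumes "f \<in> borel_measurable (lebesgue_on {a..b})" "C \<ge> 0"
    and "AE x in lebesgue_on {a..b}. norm (f x) \<le> C"
  shows "Linf_norm a b f \<le> C"
proof -
  have "esssup (lebesgue_on {a..b}) (\<lambda>x. ereal (norm (f x))) \<le> ereal C"
    using assms(1,3) by (intro esssup_I) auto
  with \<open>C \<ge> 0\<close> show ?thesis
    unfolding Linf_norm_def by (cases "esssup (lebesgue_on {a..b}) (\<lambda>x. ereal (norm (f x)))") auto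
qed

lemma AE_norm_le_Linf_norm:
  assumes "ess_bounded_on a b f"
  shows "AE x in lebesgue_on {a..b}. norm (f x) \<le> Linf_norm a b f"
proof -
  let ?s = "esssup (lebesgue_on {a..b}) (\<lambda>x. ereal (norm (f x)))"
  obtain C where "AE x in lebesgue_on {a..b}. ereal (norm (f x)) \<le> ereal C"
    and "f \<in> borel_measurable (lebesgue_on {a..b})"
    using assms unfolding ess_bounded_on_def by auto
  then have "?s \<le> ereal C"
    by (intro esssup_I) auto
  then have "?s \<noteq> \<infinity>"
    by auto
  moreover have "AE x in lebesgue_on {a..b}. ereal (norm (f x)) \<le> ?s"
    by (rule esssup_AE)
  ultimately show ?thesis
    unfolding Linf_norm_def by (elim eventually_mono) (cases ?s, auto)
qed

lemma Linf_norm_cong_AE: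
  assumes "AE x in lebesgue_on {a..b}. f x = g x"
    and "f \<in> borel_measurable (lebesgue_on {a..b})" "g \<in> borel_measurable (lebesgue_on {a..b})"
  shows "Linf_norm a b f = Linf_norm a b g"
  unfolding Linf_norm_def using assms
  by (subst esssup_AE_cong[where g = "\<lambda>x. ereal (norm (g x))"]) (auto elim: eventually_mono)

lemma Linf_norm_add_le:
  assumes "ess_bounded_on a b f" "ess_bounded_on a b g"
  shows "Linf_norm a b (\<lambda>x. f x + g x) \<le> Linf_norm a b f + Linf_norm a b g"
proof (rule Linf_norm_le)
  show "(\<lambda>x. f x + g x) \<in> borel_measurable (lebesgue_on {a..b})"
    using assms unfolding ess_bounded_on_def by auto
  show "AE x in lebesgue_on {a..b}. norm (f x + g x) \<le> Linf_norm a b f + Linf_norm a b g"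
    using AE_norm_le_Linf_norm[OF assms(1)] AE_norm_le_Linf_norm[OF assms(2)]
    by eventually_elim (meson add_mono norm_triangle_le)
qed (simp add: Linf_norm_nonneg)

lemma Linf_norm_mult_le:
  assumes "ess_bounded_on a b f" "ess_bounded_on a b g"
  shows "Linf_norm a b (\<lambda>x. f x * g x) \<le> Linf_norm a b f * Linf_norm a b g"
proof (rule Linf_norm_le)
  show "(\<lambda>x. f x * g x) \<in> borel_measurable (lebesgue_on {a..b})"
    using assms unfolding ess_bounded_on_def by auto
  show "AE x in lebesgue_on {a..b}. norm (f x * g x) \<le> Linf_norm a b f * Linf_norm a b g"
    using AE_norm_le_Linf_norm[OF assms(1)] AE_norm_le_Linf_norm[OF assms(2)]
    by eventually_elim (simp add: norm_mult mult_mono')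
qed (simp add: Linf_norm_nonneg)

lemma Linf_norm_of_nat_mult_le:
  assumes "ess_bounded_on a b f" "ess_bounded_on a b g"
  shows "Linf_norm a b (\<lambda>x. of_nat c * f x * g x) \<le> real c * Linf_norm a b f * Linf_norm a b g"
proof (rule Linf_norm_le)
  show "(\<lambda>x. of_nat c * f x * g x) \<in> borel_measurable (lebesgue_on {a..b})"
    using assms unfolding ess_bounded_on_def by auto
  show "AE x in lebesgue_on {a..b}. norm (of_nat c * f x * g x) \<le> real c * Linf_norm a b f * Linf_norm a b g"
    using AE_norm_le_Linf_norm[OF assms(1)] AE_norm_le_Linf_norm[OF assms(2)]
    by eventually_elim (simp add: norm_mult mult.assoc mult_left_mono mult_mono')
qed (simp add: Linf_norm_nonneg)

lemma Linf_norm_const_le: "Linf_norm a b (\<lambda>x. c) \<le> norm c"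
  by (rule Linf_norm_le) auto

lemma Linf_norm_sum_le:
  assumes "\<And>i. i \<in> I \<Longrightarrow> ess_bounded_on a b (f i)"
  shows "Linf_norm a b (\<lambda>x. \<Sum>i\<in>I. f i x) \<le> (\<Sum>i\<in>I. Linf_norm a b (f i))"
  using assms
proof (induction I rule: infinite_finite_induct)
  case (insert i I)
  have "Linf_norm a b (\<lambda>x. f i x + (\<Sum>i\<in>I. f i x)) \<le> Linf_norm a b (f i) + Linf_norm a b (\<lambda>x. \<Sum>i\<in>I. f i x)"
    using insert.prems by (intro Linf_norm_add_le ess_bounded_on_sum) auto
  with insert show ?case by simp
qed (use Linf_norm_const_le[of a b 0] in simp_all)

section \<open>Functions with vanishing integrals\<close>

lemma emeasure_density_Ioi_eq_integral:
  fixes h :: "real \<Rightarrow> real"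
  assumes "integrable lborel h"
  shows "emeasure (density lborel (\<lambda>x. ennreal (h x))) {c<..}
           = ennreal (\<integral>x. indicator {c<..} x * max 0 (h x) \<partial>lborel)"
proof -
  have "emeasure (density lborel (\<lambda>x. ennreal (h x))) {c<..}
          = (\<integral>\<^sup>+x. ennreal (indicator {c<..} x * max 0 (h x)) \<partial>lborel)"
    using assms by (subst emeasure_density)
      (auto intro!: nn_integral_cong split: split_indicator simp: max_def ennreal_neg)
  also have "\<dots> = ennreal (\<integral>x. indicator {c<..} x * max 0 (h x) \<partial>lborel)"
    using integrable_mult_indicator[of "{c<..}" lborel "\<lambda>x. max 0 (h x)"] assms
    by (intro nn_integral_eq_integral) auto
  finally show ?thesis .
qed

text \<open>The positive and negative parts of \<open>w\<close> are densities of two finite measures that agree on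
  all rays \<open>{c<..}\<close>, hence coincide.\<close>

lemma AE_eq_0_if_integrals_Ioi_eq_0:
  fixes w :: "real \<Rightarrow> real"
  assumes w: "integrable lborel w"
    and ints: "\<And>c. (\<integral>x. indicator {c<..} x * w x \<partial>lborel) = 0"
  shows "AE x in lborel. w x = 0"
proof -
  let ?P = "\<lambda>x. ennreal (w x)" and ?N = "\<lambda>x. ennreal (- w x)"
  have "density lborel ?P = density lborel ?N"
  proof (rule measure_eqI_lessThan)
    fix c :: real
    have "integrable lborel (\<lambda>x. indicator {c<..} x * max 0 (w x))"
      and "integrable lborel (\<lambda>x. indicator {c<..} x * max 0 (- w x))"
      using integrable_mult_indicator[of "{c<..}" lborel "\<lambda>x. max 0 (w x)"]
        integrable_mult_indicator[of "{c<..}" lborel "\<lambda>x. max 0 (- w x)"] w by auto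
    then have "(\<integral>x. indicator {c<..} x * max 0 (w x) \<partial>lborel) - (\<integral>x. indicator {c<..} x * max 0 (- w x) \<partial>lborel)
          = (\<integral>x. indicator {c<..} x * max 0 (w x) - indicator {c<..} x * max 0 (- w x) \<partial>lborel)"
      by (rule Bochner_Integration.integral_diff[symmetric])
    also have "\<dots> = (\<integral>x. indicator {c<..} x * w x \<partial>lborel)"
      by (intro Bochner_Integration.integral_cong) (auto simp: max_def algebra_simps)
    finally have "(\<integral>x. indicator {c<..} x * max 0 (w x) \<partial>lborel) = (\<integral>x. indicator {c<..} x * max 0 (- w x) \<partial>lborel)"
      using ints[of c] by simp
    then show "emeasure (density lborel ?P) {c<..} = emeasure (density lborel ?N) {c<..}"
      using w by (simp add: emeasure_density_Ioi_eq_integral)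
    show "emeasure (density lborel ?P) {c<..} < \<infinity>"
      using w by (simp add: emeasure_density_Ioi_eq_integral)
  qed auto
  moreover have "integral\<^sup>N lborel ?P \<noteq> \<infinity>"
  proof -
    have "integral\<^sup>N lborel ?P \<le> (\<integral>\<^sup>+x. ennreal (norm (w x)) \<partial>lborel)"
      by (intro nn_integral_mono ennreal_leI) auto
    also have "\<dots> < \<infinity>"
      using w by (simp add: integrable_iff_bounded)
    finally show ?thesis by simp
  qed
  ultimately have "AE x in lborel. ?P x = ?N x"
    using w by (subst finite_density_unique[symmetric]) auto
  then show ?thesis
  proof eventually_elim
    case (elim x)
    then show ?case
      by (cases "w x \<ge> 0") (auto simp: ennreal_neg dest: sym)
  qed
qed

lemma AE_eq_0_if_integrals_Ioi_eq_0_lebesgue: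
  fixes u :: "real \<Rightarrow> real"
  assumes u: "integrable lebesgue u"
    and ints: "\<And>c. (\<integral>x. indicator {c<..} x * u x \<partial>lebesgue) = 0"
  shows "AE x in lebesgue. u x = 0"
proof -
  have [measurable]: "u \<in> borel_measurable (completion lborel)"
    using u by auto
  then obtain w where w: "w \<in> borel_measurable lborel" and "AE x in lborel. u x = w x"
    using completion_ex_borel_measurable_real by blast
  from this(2) have uw: "AE x in lebesgue. u x = w x"
    by (rule AE_completion)
  have [measurable]: "w \<in> borel_measurable borel"
    using w by simp
  have "integrable lebesgue w"
    by (rule integrable_cong_AE_imp[OF u _ uw]) (simp add: measurable_completion)
  then have "integrable lborel w"
    by (simp add: integrable_completion)
  moreover have "(\<integral>x. indicator {c<..} x * w x \<partial>lborel) = 0" for c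
  proof -
    have [measurable]: "w \<in> borel_measurable lebesgue" "(\<lambda>x::real. x) \<in> borel_measurable lebesgue"
      by (auto intro: measurable_completion)
    have "(\<integral>x. indicator {c<..} x * w x \<partial>lborel) = (\<integral>x. indicator {c<..} x * w x \<partial>lebesgue)"
      by (simp add: integral_completion)
    also have "\<dots> = (\<integral>x. indicator {c<..} x * u x \<partial>lebesgue)"
      by (rule integral_cong_AE) (measurable, use uw in \<open>auto elim: eventually_mono\<close>)
    finally show ?thesis
      using ints by simp
  qed
  ultimately have "AE x in lborel. w x = 0"
    by (rule AE_eq_0_if_integrals_Ioi_eq_0)
  then have "AE x in lebesgue. w x = 0"
    by (rule AE_completion)
  with uw show ?thesis
    by eventually_elim simp
qed

lemma AE_eq_0_if_integrals_Ioi_eq_0_complex: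
  fixes u :: "real \<Rightarrow> complex"
  assumes u: "integrable lebesgue u"
    and ints: "\<And>c. (\<integral>x. indicator {c<..} x *\<^sub>R u x \<partial>lebesgue) = 0"
  shows "AE x in lebesgue. u x = 0"
proof -
  have iu: "integrable lebesgue (\<lambda>x. indicator {c<..} x *\<^sub>R u x)" for c
    using u by (intro integrable_mult_indicator) auto
  have "(\<integral>x. indicator {c<..} x * Re (u x) \<partial>lebesgue) = Re (\<integral>x. indicator {c<..} x *\<^sub>R u x \<partial>lebesgue)"
    and "(\<integral>x. indicator {c<..} x * Im (u x) \<partial>lebesgue) = Im (\<integral>x. indicator {c<..} x *\<^sub>R u x \<partial>lebesgue)" for c
    by (simp_all flip: integral_Re[OF iu] integral_Im[OF iu])
  then have "AE x in lebesgue. Re (u x) = 0" "AE x in lebesgue. Im (u x) = 0"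
    using u ints by (auto intro!: AE_eq_0_if_integrals_Ioi_eq_0_lebesgue)
  then show ?thesis
    by eventually_elim (simp add: complex_eq_iff)
qed

lemma AE_eq_0_if_indefinite_integral_eq_0:
  fixes u :: "real \<Rightarrow> complex"
  assumes "a \<le> b" and u: "u absolutely_integrable_on {a..b}"
    and zero: "\<forall>x\<in>{a..b}. integral {a..x} u = 0"
  shows "AE x in lebesgue_on {a..b}. u x = 0"
proof -
  have on_subset: "set_integrable lebesgue S u" if "S \<in> sets lebesgue" "S \<subseteq> {a..b}" for S
    using u that by (rule set_integrable_subset)
  have zero': "(LINT t:{a..x}|lebesgue. u t) = 0" if "x \<in> {a..b}" for x
    using zero on_subset[of "{a..x}"] that by (simp add: set_lebesgue_integral_eq_integral)
  have "(LINT x:({c<..} \<inter> {a..b})|lebesgue. u x) = 0" for c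
  proof (cases "c < a")
    case True
    then have "{c<..} \<inter> {a..b} = {a..b}"
      by auto
    then show ?thesis
      using zero'[of b] \<open>a \<le> b\<close> by simp
  next
    case False
    show ?thesis
    proof (cases "c \<le> b")
      case True
      have split: "{a..b} = {a..c} \<union> ({c<..} \<inter> {a..b})"
        using True False by auto
      have "(LINT x:{a..b}|lebesgue. u x)
              = (LINT x:{a..c}|lebesgue. u x) + (LINT x:({c<..} \<inter> {a..b})|lebesgue. u x)"
        using True by (subst split, intro set_integral_Un on_subset) auto
      then show ?thesis
        using zero'[of b] zero'[of c] \<open>a \<le> b\<close> True False by simp
    qed (simp add: set_lebesgue_integral_def)
  qed
  then have "AE x in lebesgue. indicator {a..b} x *\<^sub>R u x = 0"
    using u unfolding set_integrable_def
    by (intro AE_eq_0_if_integrals_Ioi_eq_0_complex)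
      (auto simp: set_lebesgue_integral_def indicator_inter_arith[symmetric] Int_commute)
  then show ?thesis
    by (subst AE_restrict_space_iff) (auto elim!: eventually_mono split: split_indicator)
qed

section \<open>Primitives and the product rule\<close>

lemma integral_Icc_eq_integral_lebesgue_on:
  fixes \<phi> :: "real \<Rightarrow> complex"
  assumes \<phi>: "\<phi> absolutely_integrable_on {a..x}" and s: "s \<in> {a..x}"
  shows "integral {a..s} \<phi> = (\<integral>t. (if t \<le> s then \<phi> t else 0) \<partial>lebesgue_on {a..x})"
    and "integral {a..s} \<phi> = (\<integral>t. (if t < s then \<phi> t else 0) \<partial>lebesgue_on {a..x})"
proof -
  have "\<phi> absolutely_integrable_on {a..s}"
    using s by (intro set_integrable_subset[OF \<phi>]) auto
  then have "integral {a..s} \<phi> = integral\<^sup>L (lebesgue_on {a..s}) \<phi>"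
    by (intro lebesgue_integral_eq_integral[symmetric] absolutely_integrable_imp_integrable) auto
  also have "\<dots> = integral\<^sup>L (lebesgue_on {a..x}) (\<lambda>t. if t \<in> {a..s} then \<phi> t else 0)"
    using s by (intro integral_restrict[symmetric]) auto
  also have "\<dots> = (\<integral>t. (if t \<le> s then \<phi> t else 0) \<partial>lebesgue_on {a..x})"
    by (intro Bochner_Integration.integral_cong) auto
  finally show le: "integral {a..s} \<phi> = (\<integral>t. (if t \<le> s then \<phi> t else 0) \<partial>lebesgue_on {a..x})" .
  have [measurable]: "\<phi> \<in> borel_measurable (lebesgue_on {a..x})"
    "(\<lambda>t::real. t) \<in> borel_measurable (lebesgue_on {a..x})"
    using absolutely_integrable_imp_integrable[OF \<phi>] id_borel_measurable_lebesgue_on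
    by (auto simp: id_def)
  have ae: "AE t in lebesgue_on {a..x}. t \<noteq> s"
    using s by (intro AE_I'[of "{s}"]) (auto simp: null_sets_restrict_space)
  have "(\<integral>t. (if t \<le> s then \<phi> t else 0) \<partial>lebesgue_on {a..x}) = (\<integral>t. (if t < s then \<phi> t else 0) \<partial>lebesgue_on {a..x})"
  proof (rule integral_cong_AE)
    show "AE t in lebesgue_on {a..x}. (if t \<le> s then \<phi> t else 0) = (if t < s then \<phi> t else 0)"
      using ae by eventually_elim auto
  qed measurable
  with le show "integral {a..s} \<phi> = (\<integral>t. (if t < s then \<phi> t else 0) \<partial>lebesgue_on {a..x})"
    by simp
qed

lemma absolutely_integrable_continuous_mult:
  fixes f G :: "real \<Rightarrow> complex"
  assumes "continuous_on {a..b} G" and "f absolutely_integrable_on {a..b}"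
  shows "(\<lambda>t. G t * f t) absolutely_integrable_on {a..b}"
proof (rule absolutely_integrable_bounded_measurable_product[OF bilinear_times _ _ _ assms(2)])
  show "G \<in> borel_measurable (lebesgue_on {a..b})"
    by (rule continuous_imp_measurable_on_sets_lebesgue[OF assms(1)]) auto
  show "bounded (G ` {a..b})"
    by (intro compact_imp_bounded compact_continuous_image assms(1) compact_Icc)
qed auto

text \<open>Fubini on the square \<open>[a,x]\<^sup>2\<close>, split along the diagonal into the triangles \<open>t \<le> s\<close> and \<open>s < t\<close>.\<close>

lemma integral_mult_integral_eq_triangles_lebesgue_on:
  fixes f g :: "real \<Rightarrow> complex" and a x :: real
  defines "M \<equiv> lebesgue_on {a..x}"
  assumes fM: "integrable M f" and gM: "integrable M g"
  shows "integral\<^sup>L M f * integral\<^sup>L M g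
           = (\<integral>t. f t * (\<integral>s. (if s < t then g s else 0) \<partial>M) \<partial>M)
             + (\<integral>s. (\<integral>t. (if t \<le> s then f t else 0) \<partial>M) * g s \<partial>M)"
proof -
  interpret finite_measure M
    unfolding M_def by (rule finite_measure_lebesgue_on) auto
  interpret P: pair_sigma_finite M M ..
  have [measurable]: "f \<in> borel_measurable M" "g \<in> borel_measurable M" "(\<lambda>t::real. t) \<in> borel_measurable M"
    using fM gM id_borel_measurable_lebesgue_on unfolding M_def by (auto simp: id_def)
  have H: "integrable (M \<Otimes>\<^sub>M M) (\<lambda>(t, s). f t * g s)"
    using fM gM by (intro P.Fubini_integrable) (auto simp: norm_mult)
  have H1: "integrable (M \<Otimes>\<^sub>M M) (\<lambda>(t, s). (if t \<le> s then f t else 0) * g s)"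
    and H2: "integrable (M \<Otimes>\<^sub>M M) (\<lambda>(t, s). f t * (if s < t then g s else 0))"
    by (auto intro!: Bochner_Integration.integrable_bound[OF H] simp: norm_mult)
  have "integral\<^sup>L M f * integral\<^sup>L M g = integral\<^sup>L (M \<Otimes>\<^sub>M M) (\<lambda>(t, s). f t * g s)"
    using P.integral_fst'[OF H] by simp
  also have "\<dots> = integral\<^sup>L (M \<Otimes>\<^sub>M M) (\<lambda>(t, s). f t * (if s < t then g s else 0))
                   + integral\<^sup>L (M \<Otimes>\<^sub>M M) (\<lambda>(t, s). (if t \<le> s then f t else 0) * g s)"
    by (subst Bochner_Integration.integral_add[OF H2 H1, symmetric])
      (auto intro!: Bochner_Integration.integral_cong)
  also have "\<dots> = (\<integral>t. f t * (\<integral>s. (if s < t then g s else 0) \<partial>M) \<partial>M)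
                   + (\<integral>s. (\<integral>t. (if t \<le> s then f t else 0) \<partial>M) * g s \<partial>M)"
    using P.integral_fst[OF H2] P.integral_snd[OF H1] by simp
  finally show ?thesis .
qed

lemma integral_mult_integral_eq_triangles:
  fixes f g :: "real \<Rightarrow> complex"
  assumes f: "f absolutely_integrable_on {a..x}" and g: "g absolutely_integrable_on {a..x}"
  shows "integral {a..x} f * integral {a..x} g
           = integral {a..x} (\<lambda>t. f t * integral {a..t} g) + integral {a..x} (\<lambda>s. integral {a..s} f * g s)"
proof -
  let ?M = "lebesgue_on {a..x}"
  have fM: "integrable ?M f" and gM: "integrable ?M g"
    using f g by (auto intro: absolutely_integrable_imp_integrable)
  have "continuous_on {a..x} (\<lambda>t. integral {a..t} f)" "continuous_on {a..x} (\<lambda>t. integral {a..t} g)"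
    using f g by (auto intro!: indefinite_integral_continuous_1 simp: absolutely_integrable_on_def)
  then have fG: "integrable ?M (\<lambda>t. f t * integral {a..t} g)"
    and Fg: "integrable ?M (\<lambda>s. integral {a..s} f * g s)"
    using absolutely_integrable_continuous_mult f g
    by (auto intro!: absolutely_integrable_imp_integrable simp: mult.commute[of "f _"])
  have "integral {a..x} (\<lambda>t. f t * integral {a..t} g) = (\<integral>t. f t * integral {a..t} g \<partial>?M)"
    and "integral {a..x} (\<lambda>s. integral {a..s} f * g s) = (\<integral>s. integral {a..s} f * g s \<partial>?M)"
    using fG Fg by (simp_all add: lebesgue_integral_eq_integral)
  moreover have "(\<integral>t. f t * integral {a..t} g \<partial>?M) = (\<integral>t. f t * (\<integral>s. (if s < t then g s else 0) \<partial>?M) \<partial>?M)"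
    and "(\<integral>s. integral {a..s} f * g s \<partial>?M) = (\<integral>s. (\<integral>t. (if t \<le> s then f t else 0) \<partial>?M) * g s \<partial>?M)"
    by (intro Bochner_Integration.integral_cong;
        simp add: integral_Icc_eq_integral_lebesgue_on(1)[OF f] integral_Icc_eq_integral_lebesgue_on(2)[OF g])+
  moreover have "integral {a..x} f * integral {a..x} g = integral\<^sup>L ?M f * integral\<^sup>L ?M g"
    using fM gM by (simp add: lebesgue_integral_eq_integral)
  ultimately show ?thesis
    using integral_mult_integral_eq_triangles_lebesgue_on[OF fM gM] by simp
qed

definition primitive_on :: "real \<Rightarrow> real \<Rightarrow> (real \<Rightarrow> complex) \<Rightarrow> (real \<Rightarrow> complex) \<Rightarrow> bool" where
  "primitive_on a b F f \<longleftrightarrow>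
     f absolutely_integrable_on {a..b} \<and> (\<forall>x\<in>{a..b}. F x = F a + integral {a..x} f)"

lemma primitive_onD:
  assumes "primitive_on a b F f"
  shows "f absolutely_integrable_on {a..b}" and "x \<in> {a..b} \<Longrightarrow> F x = F a + integral {a..x} f"
  using assms unfolding primitive_on_def by blast+

lemma primitive_on_integrable_on:
  "primitive_on a b F f \<Longrightarrow> x \<le> b \<Longrightarrow> f integrable_on {a..x}"
  unfolding primitive_on_def absolutely_integrable_on_def
  by (auto intro: integrable_on_subinterval)

lemma primitive_on_continuous:
  assumes "primitive_on a b F f"
  shows "continuous_on {a..b} F"
proof -
  have "continuous_on {a..b} (\<lambda>x. F a + integral {a..x} f)"
    using primitive_on_integrable_on[OF assms order_refl]
    by (intro continuous_intros indefinite_integral_continuous_1)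
  then show ?thesis
    by (rule continuous_on_eq) (metis primitive_onD(2)[OF assms])
qed

lemma primitive_on_cong:
  assumes "primitive_on a b F f"
    and "\<And>x. x \<in> {a..b} \<Longrightarrow> G x = F x" "\<And>x. x \<in> {a..b} \<Longrightarrow> g x = f x"
  shows "primitive_on a b G g"
proof -
  have "g absolutely_integrable_on {a..b}"
    using absolutely_integrable_spike[OF primitive_onD(1)[OF assms(1)] negligible_empty] assms(3)
    by auto
  moreover have "G x = G a + integral {a..x} g" if "x \<in> {a..b}" for x
  proof -
    have "integral {a..x} g = integral {a..x} f"
      using that assms(3) by (intro integral_cong) auto
    moreover have "a \<in> {a..b}"
      using that by auto
    ultimately show ?thesis
      using that assms(2) primitive_onD(2)[OF assms(1) that] by simp
  qed
  ultimately show ?thesis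
    unfolding primitive_on_def by blast
qed

lemma primitive_on_const: "primitive_on a b (\<lambda>x. c) (\<lambda>x. 0)"
  by (simp add: primitive_on_def)

lemma primitive_on_add:
  assumes "primitive_on a b F f" "primitive_on a b G g"
  shows "primitive_on a b (\<lambda>x. F x + G x) (\<lambda>x. f x + g x)"
proof -
  have "F x + G x = F a + G a + integral {a..x} (\<lambda>x. f x + g x)" if "x \<in> {a..b}" for x
    using that primitive_onD(2)[OF assms(1) that] primitive_onD(2)[OF assms(2) that]
      primitive_on_integrable_on[OF assms(1)] primitive_on_integrable_on[OF assms(2)]
    by (simp add: integral_add)
  moreover have "(\<lambda>x. f x + g x) absolutely_integrable_on {a..b}"
    using primitive_onD(1)[OF assms(1)] primitive_onD(1)[OF assms(2)] by (rule set_integral_add)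
  ultimately show ?thesis
    unfolding primitive_on_def by blast
qed

lemma primitive_on_cmult:
  assumes "primitive_on a b F f"
  shows "primitive_on a b (\<lambda>x. c * F x) (\<lambda>x. c * f x)"
proof -
  have "c * F x = c * F a + integral {a..x} (\<lambda>x. c * f x)" if "x \<in> {a..b}" for x
    using primitive_onD(2)[OF assms that] by (simp add: distrib_left)
  then show ?thesis
    using set_integrable_mult_right[OF primitive_onD(1)[OF assms]] unfolding primitive_on_def by blast
qed

lemma primitive_on_sum:
  "(\<And>i. i \<in> I \<Longrightarrow> primitive_on a b (F i) (f i))
     \<Longrightarrow> primitive_on a b (\<lambda>x. \<Sum>i\<in>I. F i x) (\<lambda>x. \<Sum>i\<in>I. f i x)"
  by (induction I rule: infinite_finite_induct) (auto intro: primitive_on_add primitive_on_const)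

lemma primitive_on_AE_unique:
  assumes "a \<le> b" "primitive_on a b F f" "primitive_on a b F g"
  shows "AE x in lebesgue_on {a..b}. f x = g x"
proof -
  have "integral {a..x} (\<lambda>t. f t - g t) = 0" if "x \<in> {a..b}" for x
    using primitive_onD(2)[OF assms(2) that] primitive_onD(2)[OF assms(3) that] that
      primitive_on_integrable_on[OF assms(2)] primitive_on_integrable_on[OF assms(3)]
    by (simp add: integral_diff)
  then have "AE x in lebesgue_on {a..b}. f x - g x = 0"
    using assms(1) primitive_onD(1)[OF assms(2)] primitive_onD(1)[OF assms(3)]
    by (intro AE_eq_0_if_indefinite_integral_eq_0 set_integral_diff) auto
  then show ?thesis
    by eventually_elim simp
qed

lemma primitive_on_mult_vanishing:
  assumes F: "primitive_on a b F f" and G: "primitive_on a b G g" and "F a = 0" "G a = 0"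
  shows "primitive_on a b (\<lambda>x. F x * G x) (\<lambda>x. f x * G x + F x * g x)"
proof -
  have fG: "(\<lambda>t. f t * G t) absolutely_integrable_on {a..b}"
    using absolutely_integrable_continuous_mult[OF primitive_on_continuous[OF G] primitive_onD(1)[OF F]]
    by (simp add: mult.commute)
  have Fg: "(\<lambda>t. F t * g t) absolutely_integrable_on {a..b}"
    by (rule absolutely_integrable_continuous_mult[OF primitive_on_continuous[OF F] primitive_onD(1)[OF G]])
  have "F x * G x = integral {a..x} (\<lambda>t. f t * G t + F t * g t)" if x: "x \<in> {a..b}" for x
  proof -
    have on_sub: "h absolutely_integrable_on {a..x}" if "h absolutely_integrable_on {a..b}" for h :: "real \<Rightarrow> complex"
      using that x by (intro set_integrable_subset[OF that]) auto
    have "F x * G x = integral {a..x} f * integral {a..x} g"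
      using primitive_onD(2)[OF F x] primitive_onD(2)[OF G x] \<open>F a = 0\<close> \<open>G a = 0\<close> by simp
    also have "\<dots> = integral {a..x} (\<lambda>t. f t * integral {a..t} g) + integral {a..x} (\<lambda>t. integral {a..t} f * g t)"
      by (intro integral_mult_integral_eq_triangles on_sub primitive_onD(1)[OF F] primitive_onD(1)[OF G])
    also have "\<dots> = integral {a..x} (\<lambda>t. f t * G t) + integral {a..x} (\<lambda>t. F t * g t)"
      using primitive_onD(2)[OF F] primitive_onD(2)[OF G] \<open>F a = 0\<close> \<open>G a = 0\<close> x
      by (intro arg_cong2[where f = "(+)"] integral_cong) auto
    also have "\<dots> = integral {a..x} (\<lambda>t. f t * G t + F t * g t)"
      using on_sub[OF fG] on_sub[OF Fg] by (simp add: integral_add absolutely_integrable_on_def)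
    finally show ?thesis .
  qed
  then show ?thesis
    using set_integral_add(1)[OF fG Fg] \<open>F a = 0\<close> \<open>G a = 0\<close> unfolding primitive_on_def by simp
qed

lemma primitive_on_mult:
  assumes F: "primitive_on a b F f" and G: "primitive_on a b G g"
  shows "primitive_on a b (\<lambda>x. F x * G x) (\<lambda>x. f x * G x + F x * g x)"
proof -
  have shift: "primitive_on a b (\<lambda>x. H x - H a) h" if "primitive_on a b H h" for H h
    using primitive_on_add[OF that primitive_on_const[of a b "- H a"]] by simp
  let ?F0 = "\<lambda>x. F x - F a" and ?G0 = "\<lambda>x. G x - G a"
  have "primitive_on a b (\<lambda>x. F a * G a + (F a * ?G0 x + G a * ?F0 x + ?F0 x * ?G0 x))
          (\<lambda>x. 0 + (F a * g x + G a * f x + (f x * ?G0 x + ?F0 x * g x)))"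
    by (intro primitive_on_add primitive_on_const primitive_on_cmult primitive_on_mult_vanishing
        shift F G) simp_all
  then show ?thesis
    by (rule primitive_on_cong) (simp_all add: algebra_simps)
qed

section \<open>Generalized derivatives\<close>

lemma continuous_on_Icc_AE_eq:
  fixes f g :: "real \<Rightarrow> complex"
  assumes "a < b" and "continuous_on {a..b} f" "continuous_on {a..b} g"
    and ae: "AE x in lebesgue_on {a..b}. f x = g x" and x: "x \<in> {a..b}"
  shows "f x = g x"
proof -
  let ?C = "{x \<in> {a..b}. f x - g x = 0}"
  have closed: "closed ?C"
    using assms by (intro continuous_closed_preimage_constant continuous_on_diff) auto
  have "AE x in lebesgue. x \<in> {a..b} \<longrightarrow> f x = g x"
    using ae by (subst (asm) AE_restrict_space_iff) simp_all
  then have ae_open: "AE x \<in> {a<..<b} in lebesgue. x \<in> ?C"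
    by (rule eventually_mono) simp
  have "y \<in> ?C" if "y \<in> {a<..<b}" for y
    by (rule mem_closed_if_AE_lebesgue_open[OF _ closed ae_open that]) simp
  then have zero: "f y - g y = 0" if "y \<in> {a<..<b}" for y
    using that by blast
  have closure: "closure {a<..<b} = {a..b}"
    using \<open>a < b\<close> by simp
  have "continuous_on (closure {a<..<b}) (\<lambda>x. f x - g x)"
    unfolding closure using assms by (intro continuous_on_diff)
  then have "f x - g x = 0"
    by (rule continuous_constant_on_closure) (use zero x closure in auto)
  then show ?thesis
    by simp
qed

lemma sob_derivs_iff_primitive_on:
  "sob_derivs a b k f g \<longleftrightarrow>
     (\<forall>x\<in>{a..b}. g 0 x = f x) \<and> (\<forall>j<k. primitive_on a b (g j) (g (Suc j))) \<and> ess_bounded_on a b (g k)"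
  unfolding sob_derivs_def primitive_on_def ess_bounded_on_def by blast

lemma sob_derivs_primitive_on:
  "sob_derivs a b k f g \<Longrightarrow> j < k \<Longrightarrow> primitive_on a b (g j) (g (Suc j))"
  by (simp add: sob_derivs_iff_primitive_on)

lemma sob_derivs_continuous_on:
  "sob_derivs a b k f g \<Longrightarrow> j < k \<Longrightarrow> continuous_on {a..b} (g j)"
  by (rule primitive_on_continuous[OF sob_derivs_primitive_on])

lemma sob_derivs_ess_bounded_on:
  assumes "sob_derivs a b k f g" "j \<le> k"
  shows "ess_bounded_on a b (g j)"
proof (cases "j < k")
  case True
  then show ?thesis
    using assms by (intro ess_bounded_on_continuous sob_derivs_continuous_on)
next
  case False
  with assms show ?thesis
    by (simp add: sob_derivs_iff_primitive_on)
qed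

lemma sob_derivs_unique_below_top:
  assumes "a < b" and g: "sob_derivs a b k f g" and h: "sob_derivs a b k f h"
  shows "j < k \<Longrightarrow> x \<in> {a..b} \<Longrightarrow> g j x = h j x"
proof (induction j arbitrary: x)
  case 0
  with g h show ?case
    by (simp add: sob_derivs_iff_primitive_on)
next
  case (Suc j)
  have "primitive_on a b (g j) (h (Suc j))"
    using Suc by (intro primitive_on_cong[OF sob_derivs_primitive_on[OF h]]) auto
  then have ae: "AE x in lebesgue_on {a..b}. g (Suc j) x = h (Suc j) x"
    using sob_derivs_primitive_on[OF g] Suc.prems \<open>a < b\<close> by (intro primitive_on_AE_unique) auto
  show ?case
    using Suc.prems sob_derivs_continuous_on[OF g] sob_derivs_continuous_on[OF h]
    by (intro continuous_on_Icc_AE_eq[OF \<open>a < b\<close> _ _ ae]) auto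
qed

lemma sob_derivs_AE_unique:
  assumes "a < b" and g: "sob_derivs a b k f g" and h: "sob_derivs a b k f h" and "j \<le> k"
  shows "AE x in lebesgue_on {a..b}. g j x = h j x"
proof (cases j)
  case 0
  with g h show ?thesis
    by (intro AE_I2) (simp add: sob_derivs_iff_primitive_on)
next
  case (Suc i)
  have "primitive_on a b (g i) (h (Suc i))"
    using sob_derivs_unique_below_top[OF assms(1-3)] Suc \<open>j \<le> k\<close>
    by (intro primitive_on_cong[OF sob_derivs_primitive_on[OF h]]) auto
  with Suc show ?thesis
    using sob_derivs_primitive_on[OF g] \<open>a < b\<close> \<open>j \<le> k\<close> by (intro primitive_on_AE_unique) auto
qed

lemma sob_derivs_sob_deriv:
  "Wsob a b k f \<Longrightarrow> sob_derivs a b k f (\<lambda>j. sob_deriv a b k j f)"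
  unfolding Wsob_def sob_deriv_def by (metis someI)

lemma sob_norm_eq:
  assumes "a < b" and g: "sob_derivs a b k f g"
  shows "sob_norm a b k f = (\<Sum>j\<le>k. Linf_norm a b (g j))"
  unfolding sob_norm_def
proof (rule sum.cong)
  fix j assume "j \<in> {..k}"
  then have "j \<le> k"
    by simp
  have s: "sob_derivs a b k f (\<lambda>j. sob_deriv a b k j f)"
    using g by (intro sob_derivs_sob_deriv) (auto simp: Wsob_def)
  show "Linf_norm a b (sob_deriv a b k j f) = Linf_norm a b (g j)"
    using sob_derivs_AE_unique[OF \<open>a < b\<close> s g \<open>j \<le> k\<close>]
      sob_derivs_ess_bounded_on[OF s \<open>j \<le> k\<close>] sob_derivs_ess_bounded_on[OF g \<open>j \<le> k\<close>]
    unfolding ess_bounded_on_def by (intro Linf_norm_cong_AE) auto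
qed simp

lemma sob_norm_nonneg: "sob_norm a b k f \<ge> 0"
  unfolding sob_norm_def by (intro sum_nonneg Linf_norm_nonneg)

lemma Linf_norm_le_sob_norm:
  assumes "a < b" "sob_derivs a b k f g" "j \<le> k"
  shows "Linf_norm a b (g j) \<le> sob_norm a b k f"
  unfolding sob_norm_eq[OF assms(1,2)] using assms(3) by (intro member_le_sum Linf_norm_nonneg) auto

lemma sob_derivs_add:
  assumes "sob_derivs a b k f g" "sob_derivs a b k f' g'"
  shows "sob_derivs a b k (\<lambda>x. f x + f' x) (\<lambda>j x. g j x + g' j x)"
  using assms unfolding sob_derivs_iff_primitive_on by (auto intro: primitive_on_add ess_bounded_on_add)

lemma sob_derivs_cmult:
  assumes "sob_derivs a b k f g"
  shows "sob_derivs a b k (\<lambda>x. c * f x) (\<lambda>j x. c * g j x)"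
  using assms unfolding sob_derivs_iff_primitive_on
  by (auto intro: primitive_on_cmult ess_bounded_on_mult ess_bounded_on_const)

lemma sob_derivs_const: "sob_derivs a b k (\<lambda>x. c) (\<lambda>j x. if j = 0 then c else 0)"
  unfolding sob_derivs_iff_primitive_on
  by (auto intro: ess_bounded_on_const primitive_on_cong[OF primitive_on_const[of a b c]]
      primitive_on_const)

lemma sob_derivs_sum:
  "(\<And>i. i \<in> I \<Longrightarrow> sob_derivs a b k (f i) (g i))
     \<Longrightarrow> sob_derivs a b k (\<lambda>x. \<Sum>i\<in>I. f i x) (\<lambda>j x. \<Sum>i\<in>I. g i j x)"
  using sob_derivs_const[of a b k 0]
  by (induction I rule: infinite_finite_induct) (simp_all add: sob_derivs_add cong: if_cong)

lemma leibniz_sum_Suc: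
  fixes u v :: "nat \<Rightarrow> 'a::comm_semiring_1"
  shows "(\<Sum>i\<le>j. of_nat (j choose i) * (u (Suc i) * v (j - i) + u i * v (Suc (j - i))))
       = (\<Sum>i\<le>Suc j. of_nat (Suc j choose i) * u i * v (Suc j - i))"
proof -
  have "(\<Sum>i\<le>Suc j. of_nat (Suc j choose i) * u i * v (Suc j - i))
      = u 0 * v (Suc j) + (\<Sum>i\<le>j. of_nat (Suc j choose Suc i) * u (Suc i) * v (j - i))"
    by (subst sum.atMost_Suc_shift) simp
  also have "\<dots> = (\<Sum>i\<le>j. of_nat (j choose i) * u (Suc i) * v (j - i))
                   + (u 0 * v (Suc j) + (\<Sum>i\<le>j. of_nat (j choose Suc i) * u (Suc i) * v (j - i)))"
    by (simp add: sum.distrib algebra_simps)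
  also have "u 0 * v (Suc j) + (\<Sum>i\<le>j. of_nat (j choose Suc i) * u (Suc i) * v (j - i))
           = (\<Sum>i\<le>Suc j. of_nat (j choose i) * u i * v (Suc j - i))"
    by (subst sum.atMost_Suc_shift) simp
  also have "\<dots> = (\<Sum>i\<le>j. of_nat (j choose i) * u i * v (Suc j - i))"
    by (simp add: binomial_eq_0)
  also have "\<dots> = (\<Sum>i\<le>j. of_nat (j choose i) * u i * v (Suc (j - i)))"
    by (intro sum.cong) (auto simp: Suc_diff_le)
  finally show ?thesis
    by (simp add: sum.distrib algebra_simps)
qed

definition leibniz_derivs :: "(nat \<Rightarrow> real \<Rightarrow> complex) \<Rightarrow> (nat \<Rightarrow> real \<Rightarrow> complex) \<Rightarrow> nat \<Rightarrow> real \<Rightarrow> complex" where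
  "leibniz_derivs u v j x = (\<Sum>i\<le>j. of_nat (j choose i) * u i x * v (j - i) x)"

lemma sob_derivs_mult:
  assumes u: "sob_derivs a b k f u" and v: "sob_derivs a b (Suc k) g v"
  shows "sob_derivs a b k (\<lambda>x. f x * g x) (leibniz_derivs u v)"
  unfolding sob_derivs_iff_primitive_on
proof (intro conjI allI impI ballI)
  fix x assume "x \<in> {a..b}"
  with u v show "leibniz_derivs u v 0 x = f x * g x"
    by (simp add: leibniz_derivs_def sob_derivs_iff_primitive_on)
next
  fix j assume "j < k"
  have "primitive_on a b (\<lambda>x. \<Sum>i\<le>j. of_nat (j choose i) * (u i x * v (j - i) x))
          (\<lambda>x. \<Sum>i\<le>j. of_nat (j choose i) * (u (Suc i) x * v (j - i) x + u i x * v (Suc (j - i)) x))"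
    using \<open>j < k\<close>
    by (intro primitive_on_sum primitive_on_cmult primitive_on_mult
        sob_derivs_primitive_on[OF u] sob_derivs_primitive_on[OF v]) auto
  moreover have "leibniz_derivs u v (Suc j) x
      = (\<Sum>i\<le>j. of_nat (j choose i) * (u (Suc i) x * v (j - i) x + u i x * v (Suc (j - i)) x))" for x
    unfolding leibniz_derivs_def by (rule leibniz_sum_Suc[symmetric])
  ultimately show "primitive_on a b (leibniz_derivs u v j) (leibniz_derivs u v (Suc j))"
    by (elim primitive_on_cong) (simp_all add: leibniz_derivs_def mult.assoc)
next
  show "ess_bounded_on a b (leibniz_derivs u v k)"
    unfolding leibniz_derivs_def
    by (intro ess_bounded_on_sum ess_bounded_on_mult ess_bounded_on_const
        sob_derivs_ess_bounded_on[OF u] sob_derivs_ess_bounded_on[OF v]) auto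
qed

lemma Wsob_mult: "Wsob a b k f \<Longrightarrow> Wsob a b (Suc k) g \<Longrightarrow> Wsob a b k (\<lambda>x. f x * g x)"
  unfolding Wsob_def by (blast intro: sob_derivs_mult)

lemma Wsob_diff: "Wsob a b k f \<Longrightarrow> Wsob a b k g \<Longrightarrow> Wsob a b k (\<lambda>x. f x - g x)"
  unfolding Wsob_def using sob_derivs_add[OF _ sob_derivs_cmult[where c = "-1"]] by fastforce

lemma sob_norm_const_le:
  assumes "a < b"
  shows "sob_norm a b k (\<lambda>x. c) \<le> norm c"
proof -
  have "sob_norm a b k (\<lambda>x. c) = (\<Sum>j\<le>k. Linf_norm a b (\<lambda>x. if j = 0 then c else 0))"
    by (rule sob_norm_eq[OF assms sob_derivs_const])
  also have "\<dots> \<le> (\<Sum>j\<le>k. if j = 0 then norm c else 0)"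
    using Linf_norm_const_le[of a b 0] Linf_norm_const_le[of a b c] by (intro sum_mono) auto
  also have "\<dots> = norm c"
    by (simp add: sum.delta')
  finally show ?thesis .
qed

lemma sob_norm_sum_le:
  assumes "a < b" and "\<And>i. i \<in> I \<Longrightarrow> Wsob a b k (f i)"
  shows "sob_norm a b k (\<lambda>x. \<Sum>i\<in>I. f i x) \<le> (\<Sum>i\<in>I. sob_norm a b k (f i))"
proof -
  let ?g = "\<lambda>i j. sob_deriv a b k j (f i)"
  have g: "sob_derivs a b k (f i) (?g i)" if "i \<in> I" for i
    using assms(2)[OF that] by (rule sob_derivs_sob_deriv)
  have "sob_norm a b k (\<lambda>x. \<Sum>i\<in>I. f i x) = (\<Sum>j\<le>k. Linf_norm a b (\<lambda>x. \<Sum>i\<in>I. ?g i j x))"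
    by (intro sob_norm_eq[OF \<open>a < b\<close>] sob_derivs_sum g)
  also have "\<dots> \<le> (\<Sum>j\<le>k. \<Sum>i\<in>I. Linf_norm a b (?g i j))"
    by (intro sum_mono Linf_norm_sum_le sob_derivs_ess_bounded_on[OF g]) auto
  also have "\<dots> = (\<Sum>i\<in>I. sob_norm a b k (f i))"
    by (subst sum.swap) (intro sum.cong refl sob_norm_eq[OF \<open>a < b\<close> g, symmetric])
  finally show ?thesis .
qed

text \<open>The crude bound \<open>(j choose i) \<le> 2\<^sup>k\<close> on each of the at most \<open>(k + 1)\<^sup>2\<close> Leibniz terms suffices.\<close>

lemma sob_norm_mult_le:
  assumes "a < b" and f: "Wsob a b k f" and g: "Wsob a b (Suc k) g"
  shows "sob_norm a b k (\<lambda>x. f x * g x) \<le> real (Suc k)^2 * 2^k * sob_norm a b k f * sob_norm a b (Suc k) g"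
proof -
  let ?u = "\<lambda>j. sob_deriv a b k j f" and ?v = "\<lambda>j. sob_deriv a b (Suc k) j g"
  let ?Nf = "sob_norm a b k f" and ?Ng = "sob_norm a b (Suc k) g"
  have u: "sob_derivs a b k f ?u" and v: "sob_derivs a b (Suc k) g ?v"
    using f g by (auto intro: sob_derivs_sob_deriv)
  have term_le: "Linf_norm a b (\<lambda>x. of_nat (j choose i) * ?u i x * ?v (j - i) x) \<le> 2^k * ?Nf * ?Ng"
    if "i \<le> j" "j \<le> k" for i j
  proof -
    have "j choose i \<le> 2^k"
      using binomial_le_pow2[of j i] power_increasing[of j k "2::nat"] \<open>j \<le> k\<close> by linarith
    then have "real (j choose i) \<le> 2^k"
      by (metis of_nat_le_iff of_nat_numeral of_nat_power)
    moreover have "Linf_norm a b (\<lambda>x. of_nat (j choose i) * ?u i x * ?v (j - i) x)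
        \<le> real (j choose i) * Linf_norm a b (?u i) * Linf_norm a b (?v (j - i))"
      using that by (intro Linf_norm_of_nat_mult_le sob_derivs_ess_bounded_on[OF u] sob_derivs_ess_bounded_on[OF v]) auto
    ultimately show ?thesis
      using that by (elim order.trans, intro mult_mono Linf_norm_le_sob_norm[OF \<open>a < b\<close> u]
          Linf_norm_le_sob_norm[OF \<open>a < b\<close> v]) (auto simp: Linf_norm_nonneg sob_norm_nonneg)
  qed
  have "sob_norm a b k (\<lambda>x. f x * g x) = (\<Sum>j\<le>k. Linf_norm a b (leibniz_derivs ?u ?v j))"
    by (rule sob_norm_eq[OF \<open>a < b\<close> sob_derivs_mult[OF u v]])
  also have "\<dots> \<le> (\<Sum>j\<le>k. \<Sum>i\<le>j. Linf_norm a b (\<lambda>x. of_nat (j choose i) * ?u i x * ?v (j - i) x))"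
    unfolding leibniz_derivs_def
    by (intro sum_mono Linf_norm_sum_le ess_bounded_on_mult ess_bounded_on_const
        sob_derivs_ess_bounded_on[OF u] sob_derivs_ess_bounded_on[OF v]) auto
  also have "\<dots> \<le> (\<Sum>j\<le>k. \<Sum>i\<le>k. 2^k * ?Nf * ?Ng)"
  proof (rule sum_mono)
    fix j assume "j \<in> {..k}"
    then have "(\<Sum>i\<le>j. Linf_norm a b (\<lambda>x. of_nat (j choose i) * ?u i x * ?v (j - i) x))
        \<le> (\<Sum>i\<le>j. 2^k * ?Nf * ?Ng)"
      by (intro sum_mono term_le) auto
    also have "\<dots> \<le> (\<Sum>i\<le>k. 2^k * ?Nf * ?Ng)"
      using \<open>j \<in> {..k}\<close> by (intro sum_mono2) (auto simp: sob_norm_nonneg)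
    finally show "(\<Sum>i\<le>j. Linf_norm a b (\<lambda>x. of_nat (j choose i) * ?u i x * ?v (j - i) x))
        \<le> (\<Sum>i\<le>k. 2^k * ?Nf * ?Ng)" .
  qed
  also have "\<dots> = real (Suc k)^2 * 2^k * ?Nf * ?Ng"
    by (simp add: power2_eq_square algebra_simps)
  finally show ?thesis .
qed

section \<open>Multiplication operators\<close>

definition mult_op :: "(real \<Rightarrow> complex^'m^'m) \<Rightarrow> (real \<Rightarrow> complex^'m) \<Rightarrow> real \<Rightarrow> complex^'m" where
  "mult_op B y x = B x *v y x"

lemma Lop_diff_eq_mult_op: "Lop a b n A y x - Lop a b n A' y x = mult_op (\<lambda>x. A x - A' x) y x"
  unfolding Lop_def mult_op_def by (simp add: matrix_vector_mult_diff_rdistrib)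

lemma vnorm_nonneg: "vnorm a b k y \<ge> 0"
  unfolding vnorm_def by (intro sum_nonneg sob_norm_nonneg)

lemma mnorm_nonneg: "mnorm a b k B \<ge> 0"
  unfolding mnorm_def by (intro sum_nonneg sob_norm_nonneg)

lemma mW_diff: "mW a b k A \<Longrightarrow> mW a b k A' \<Longrightarrow> mW a b k (\<lambda>x. A x - A' x)"
  unfolding mW_def by (simp add: Wsob_diff)

lemma vW_axis: "vW a b k (\<lambda>x. axis j 1)"
  unfolding vW_def Wsob_def using sob_derivs_const by blast

lemma vnorm_axis_le:
  assumes "a < b"
  shows "vnorm a b k (\<lambda>x. axis j (1::complex)) \<le> 1"
proof -
  have "vnorm a b k (\<lambda>x. axis j (1::complex)) \<le> (\<Sum>i\<in>UNIV. norm (axis j (1::complex) $ i))"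
    unfolding vnorm_def by (intro sum_mono sob_norm_const_le[OF assms])
  also have "\<dots> = 1"
    by (simp add: axis_def if_distrib sum.delta' cong: if_cong)
  finally show ?thesis .
qed

lemma mnorm_eq_sum_columns: "mnorm a b k B = (\<Sum>j\<in>UNIV. vnorm a b k (mult_op B (\<lambda>x. axis j 1)))"
proof -
  have "(B x *v axis j 1) $ i = B x $ i $ j" for x i j
    by (simp add: matrix_vector_mult_def axis_def if_distrib sum.delta' cong: if_cong)
  then show ?thesis
    unfolding mnorm_def vnorm_def mult_op_def by (subst sum.swap) simp
qed

lemma vnorm_mult_op_le:
  assumes "a < b" and B: "mW a b k B" and y: "vW a b (Suc k) y"
  shows "vnorm a b k (mult_op B y) \<le> real (Suc k)^2 * 2^k * mnorm a b k B * vnorm a b (Suc k) y"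
proof -
  let ?K = "real (Suc k)^2 * 2^k"
  have y_le: "sob_norm a b (Suc k) (\<lambda>x. y x $ j) \<le> vnorm a b (Suc k) y" for j
    unfolding vnorm_def by (intro member_le_sum sob_norm_nonneg) auto
  have "sob_norm a b k (\<lambda>x. mult_op B y x $ i)
          \<le> (\<Sum>j\<in>UNIV. ?K * sob_norm a b k (\<lambda>x. B x $ i $ j) * vnorm a b (Suc k) y)" for i
  proof -
    have "sob_norm a b k (\<lambda>x. mult_op B y x $ i) \<le> (\<Sum>j\<in>UNIV. sob_norm a b k (\<lambda>x. B x $ i $ j * y x $ j))"
      using B y unfolding mult_op_def matrix_vector_mult_def mW_def vW_def
      by (simp add: sob_norm_sum_le[OF \<open>a < b\<close>] Wsob_mult)
    also have "\<dots> \<le> (\<Sum>j\<in>UNIV. ?K * sob_norm a b k (\<lambda>x. B x $ i $ j) * vnorm a b (Suc k) y)"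
      using B y unfolding mW_def vW_def
      by (intro sum_mono order.trans[OF sob_norm_mult_le[OF \<open>a < b\<close>]] mult_left_mono y_le)
        (auto simp: sob_norm_nonneg)
    finally show ?thesis .
  qed
  then have "vnorm a b k (mult_op B y) \<le> (\<Sum>i\<in>UNIV. \<Sum>j\<in>UNIV. ?K * sob_norm a b k (\<lambda>x. B x $ i $ j) * vnorm a b (Suc k) y)"
    unfolding vnorm_def by (intro sum_mono)
  also have "\<dots> = ?K * mnorm a b k B * vnorm a b (Suc k) y"
    unfolding mnorm_def by (simp add: sum_distrib_left sum_distrib_right mult.assoc)
  finally show ?thesis .
qed

lemma opnorm_le:
  fixes T :: "(real \<Rightarrow> complex^'m) \<Rightarrow> real \<Rightarrow> complex^'m"
  assumes "\<And>y. vW a b n y \<Longrightarrow> vnorm a b (n - 1) (T y) \<le> C * vnorm a b n y" and "C \<ge> 0"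
  shows "opnorm a b n T \<le> ereal C"
  unfolding opnorm_def
proof (rule Sup_least, clarify)
  fix y :: "real \<Rightarrow> complex^'m" assume "vW a b n y" "vnorm a b n y \<le> 1"
  then have "vnorm a b (n - 1) (T y) \<le> C * 1"
    using assms mult_left_mono order.trans by blast
  then show "ereal (vnorm a b (n - 1) (T y)) \<le> ereal C"
    by simp
qed

lemma opnorm_ge:
  "vW a b n y \<Longrightarrow> vnorm a b n y \<le> 1 \<Longrightarrow> ereal (vnorm a b (n - 1) (T y)) \<le> opnorm a b n T"
  unfolding opnorm_def by (rule Sup_upper) blast

lemma opnorm_nonneg:
  fixes T :: "(real \<Rightarrow> complex^'m) \<Rightarrow> real \<Rightarrow> complex^'m"
  assumes "a < b"
  shows "0 \<le> opnorm a b n T"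
  using opnorm_ge[OF vW_axis vnorm_axis_le[OF assms], where T = T] vnorm_nonneg
  by (metis ereal_less_eq(5) order.trans zero_ereal_def)

lemma tendsto_mnorm_if_columns:
  assumes "\<And>j. ((\<lambda>\<epsilon>. vnorm a b k (mult_op (B \<epsilon>) (\<lambda>x. axis j 1))) \<longlongrightarrow> 0) F"
  shows "((\<lambda>\<epsilon>. mnorm a b k (B \<epsilon>)) \<longlongrightarrow> 0) F"
  unfolding mnorm_eq_sum_columns by (intro tendsto_null_sum assms)

lemma tendsto_opnorm_mult_op:
  assumes "a < b" and "\<forall>\<^sub>F \<epsilon> in F. mW a b k (B \<epsilon>)" and "((\<lambda>\<epsilon>. mnorm a b k (B \<epsilon>)) \<longlongrightarrow> 0) F"
  shows "((\<lambda>\<epsilon>. opnorm a b (Suc k) (mult_op (B \<epsilon>))) \<longlongrightarrow> 0) F"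
proof (rule tendsto_sandwich[OF _ _ tendsto_const])
  let ?K = "real (Suc k)^2 * 2^k"
  show "\<forall>\<^sub>F \<epsilon> in F. 0 \<le> opnorm a b (Suc k) (mult_op (B \<epsilon>))"
    by (intro always_eventually allI opnorm_nonneg[OF \<open>a < b\<close>])
  show "\<forall>\<^sub>F \<epsilon> in F. opnorm a b (Suc k) (mult_op (B \<epsilon>)) \<le> ereal (?K * mnorm a b k (B \<epsilon>))"
    using assms(2)
  proof eventually_elim
    case (elim \<epsilon>)
    show ?case
      using vnorm_mult_op_le[OF \<open>a < b\<close> elim] by (intro opnorm_le) (simp_all add: mnorm_nonneg)
  qed
  show "((\<lambda>\<epsilon>. ereal (?K * mnorm a b k (B \<epsilon>))) \<longlongrightarrow> 0) F"
    using tendsto_mult_right_zero[OF assms(3), of ?K] by (simp add: zero_ereal_def)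
qed

lemma tendsto_mnorm_if_tendsto_opnorm:
  assumes "a < b" and "((\<lambda>\<epsilon>. opnorm a b (Suc k) (mult_op (B \<epsilon>))) \<longlongrightarrow> 0) F"
  shows "((\<lambda>\<epsilon>. mnorm a b k (B \<epsilon>)) \<longlongrightarrow> 0) F"
proof (rule tendsto_mnorm_if_columns)
  fix j
  have "((\<lambda>\<epsilon>. ereal (vnorm a b k (mult_op (B \<epsilon>) (\<lambda>x. axis j 1)))) \<longlongrightarrow> 0) F"
  proof (rule tendsto_sandwich[OF _ _ tendsto_const assms(2)])
    show "\<forall>\<^sub>F \<epsilon> in F. 0 \<le> ereal (vnorm a b k (mult_op (B \<epsilon>) (\<lambda>x. axis j 1)))"
      by (intro always_eventually allI) (simp add: vnorm_nonneg)
    show "\<forall>\<^sub>F \<epsilon> in F. ereal (vnorm a b k (mult_op (B \<epsilon>) (\<lambda>x. axis j 1))) \<le> opnorm a b (Suc k) (mult_op (B \<epsilon>))"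
      using opnorm_ge[OF vW_axis vnorm_axis_le[OF \<open>a < b\<close>], where n = "Suc k"]
      by (intro always_eventually allI) simp
  qed
  then show "((\<lambda>\<epsilon>. vnorm a b k (mult_op (B \<epsilon>) (\<lambda>x. axis j 1))) \<longlongrightarrow> 0) F"
    by (simp add: zero_ereal_def)
qed

lemma tendsto_vnorm_mult_op:
  assumes "a < b" and "\<forall>\<^sub>F \<epsilon> in F. mW a b k (B \<epsilon>)" and "((\<lambda>\<epsilon>. mnorm a b k (B \<epsilon>)) \<longlongrightarrow> 0) F"
    and y: "vW a b (Suc k) y"
  shows "((\<lambda>\<epsilon>. vnorm a b k (mult_op (B \<epsilon>) y)) \<longlongrightarrow> 0) F"
proof (rule tendsto_sandwich[OF _ _ tendsto_const])
  let ?K = "real (Suc k)^2 * 2^k"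
  show "\<forall>\<^sub>F \<epsilon> in F. vnorm a b k (mult_op (B \<epsilon>) y) \<le> ?K * mnorm a b k (B \<epsilon>) * vnorm a b (Suc k) y"
    using assms(2) by eventually_elim (rule vnorm_mult_op_le[OF \<open>a < b\<close> _ y])
  show "((\<lambda>\<epsilon>. ?K * mnorm a b k (B \<epsilon>) * vnorm a b (Suc k) y) \<longlongrightarrow> 0) F"
    by (intro tendsto_mult_left_zero tendsto_mult_right_zero assms(3))
qed (simp add: vnorm_nonneg)

theorem lemma5:
  fixes a b \<epsilon>0 :: real and n :: nat and A :: "real \<Rightarrow> real \<Rightarrow> complex^'m^'m"
  assumes "a < b" and "n \<ge> 1" and "\<epsilon>0 > 0"
    and "\<forall>\<epsilon>\<in>{0..<\<epsilon>0}. mW a b (n - 1) (A \<epsilon>)"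
  shows "(((\<lambda>\<epsilon>. mnorm a b (n - 1) (\<lambda>x. A \<epsilon> x - A 0 x)) \<longlongrightarrow> 0) (at_right 0)
           \<longleftrightarrow> ((\<lambda>\<epsilon>. opnorm a b n (\<lambda>y x. Lop a b n (A \<epsilon>) y x - Lop a b n (A 0) y x)) \<longlongrightarrow> 0) (at_right 0))
       \<and> (((\<lambda>\<epsilon>. opnorm a b n (\<lambda>y x. Lop a b n (A \<epsilon>) y x - Lop a b n (A 0) y x)) \<longlongrightarrow> 0) (at_right 0)
           \<longleftrightarrow> (\<forall>y. vW a b n y \<longrightarrow>
                 ((\<lambda>\<epsilon>. vnorm a b (n - 1) (\<lambda>x. Lop a b n (A \<epsilon>) y x - Lop a b n (A 0) y x)) \<longlongrightarrow> 0) (at_right 0)))"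
proof -
  obtain k where n: "n = Suc k"
    using \<open>n \<ge> 1\<close> by (cases n) auto
  let ?B = "\<lambda>\<epsilon> x. A \<epsilon> x - A 0 x"
  have mW: "\<forall>\<^sub>F \<epsilon> in at_right 0. mW a b k (?B \<epsilon>)"
    using eventually_at_right_real[OF \<open>\<epsilon>0 > 0\<close>]
    by eventually_elim (use assms(3,4) n in \<open>auto intro: mW_diff\<close>)
  let ?mn = "\<lambda>\<epsilon>. mnorm a b k (?B \<epsilon>)" and ?op = "\<lambda>\<epsilon>. opnorm a b (Suc k) (mult_op (?B \<epsilon>))"
  have a1: "(?op \<longlongrightarrow> 0) (at_right 0) \<longleftrightarrow> (?mn \<longlongrightarrow> 0) (at_right 0)"
    using tendsto_opnorm_mult_op[OF \<open>a < b\<close> mW] tendsto_mnorm_if_tendsto_opnorm[OF \<open>a < b\<close>, where B = ?B]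
    by blast
  have a2: "(\<forall>y. vW a b (Suc k) y \<longrightarrow> ((\<lambda>\<epsilon>. vnorm a b k (mult_op (?B \<epsilon>) y)) \<longlongrightarrow> 0) (at_right 0))
      \<longleftrightarrow> (?mn \<longlongrightarrow> 0) (at_right 0)"
    using tendsto_vnorm_mult_op[OF \<open>a < b\<close> mW] tendsto_mnorm_if_columns[where B = ?B] vW_axis by blast
  show ?thesis
    unfolding Lop_diff_eq_mult_op n diff_Suc_1 using a1 a2 by blast
qed

end
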